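(* Let $(E,A)$ satisfy the standing assumptions below and set $p:=p_{\mathrm{res}}^{(E,A)}+1$. If $E(X_{\operatorname{ran}})$ is closed and $X_{\operatorname{ran}} \cap \ker R_r(\mu)^p = \{0\}$, then $E\colon X_{\operatorname{ran}} \to Z_{\operatorname{ran}}$ is boundedly invertible.
   Context: Standing assumptions: $X$, $Z$ complex Banach spaces; $E\in L(X,Z)$; $A\colon\mathrm{dom}(A)\subseteq X\to Z$ closed and densely defined; $(E,A)$ has a complex resolvent index $p_{\mathrm{res}}^{(E,A)}$, i.e.~the smallest $n\in\mathbb N_0$ such that for some $\omega\in\mathbb R$, $C>0$, $\mathbb C_{\operatorname{Re}>\omega}\subseteq\rho(E,A)$ and $\Vert(\lambda E-A)^{-1}\Vert\le C|\lambda|^{n-1}$ for all $\lambda\in\mathbb C_{\operatorname{Re}>\omega}$. $\mu\in\rho(E,A)$, $R_r(\lambda)=(\lambda E-A)^{-1}E$, $R_l(\lambda)=E(\lambda E-A)^{-1}$, $X_{\operatorname{ran}}=\overline{\operatorname{ran}R_r(\mu)^p}$, $Z_{\operatorname{ran}}=\overline{\operatorname{ran}R_l(\mu)^p}$ (closures of ranges). *)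

theory Defs
  imports "HOL-Analysis.Analysis"
begin

text \<open>A complex Banach space is modelled as a (real) Banach space type together with
  a complex scalar multiplication extending the real one and compatible with the norm.\<close>

definition complex_scaling :: "(complex \<Rightarrow> 'a::banach \<Rightarrow> 'a) \<Rightarrow> bool" where
  "complex_scaling s \<longleftrightarrow>
     (\<forall>r x. s (complex_of_real r) x = r *\<^sub>R x) \<and>
     (\<forall>a b x. s (a + b) x = s a x + s b x) \<and>
     (\<forall>a x y. s a (x + y) = s a x + s a y) \<and>
     (\<forall>a b x. s (a * b) x = s a (s b x)) \<and>
     (\<forall>a x. norm (s a x) = cmod a * norm x)"

definition bounded_clinear_op ::
  "(complex \<Rightarrow> 'a::banach \<Rightarrow> 'a) \<Rightarrow> (complex \<Rightarrow> 'b::banach \<Rightarrow> 'b) \<Rightarrow> ('a \<Rightarrow> 'b) \<Rightarrow> bool" where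
  "bounded_clinear_op sX sZ E \<longleftrightarrow> bounded_linear E \<and> (\<forall>c x. E (sX c x) = sZ c (E x))"

definition closed_densely_defined ::
  "(complex \<Rightarrow> 'a::banach \<Rightarrow> 'a) \<Rightarrow> (complex \<Rightarrow> 'b::banach \<Rightarrow> 'b) \<Rightarrow> 'a set \<Rightarrow> ('a \<Rightarrow> 'b) \<Rightarrow> bool" where
  "closed_densely_defined sX sZ D A \<longleftrightarrow>
     0 \<in> D \<and> (\<forall>x\<in>D. \<forall>y\<in>D. x + y \<in> D) \<and> (\<forall>c. \<forall>x\<in>D. sX c x \<in> D) \<and>
     (\<forall>x\<in>D. \<forall>y\<in>D. A (x + y) = A x + A y) \<and> (\<forall>c. \<forall>x\<in>D. A (sX c x) = sZ c (A x)) \<and>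
     closed {(x, A x) | x. x \<in> D} \<and>
     closure D = UNIV"

definition pencil ::
  "(complex \<Rightarrow> 'b \<Rightarrow> 'b::banach) \<Rightarrow> ('a \<Rightarrow> 'b) \<Rightarrow> ('a \<Rightarrow> 'b) \<Rightarrow> complex \<Rightarrow> 'a \<Rightarrow> 'b" where
  "pencil sZ E A l x = sZ l (E x) - A x"

definition in_resolvent_set ::
  "(complex \<Rightarrow> 'b \<Rightarrow> 'b::banach) \<Rightarrow> ('a::banach \<Rightarrow> 'b) \<Rightarrow> 'a set \<Rightarrow> ('a \<Rightarrow> 'b) \<Rightarrow> complex \<Rightarrow> bool" where
  "in_resolvent_set sZ E D A l \<longleftrightarrow>
     bij_betw (pencil sZ E A l) D UNIV \<and>
     (\<exists>K. \<forall>z. norm (inv_into D (pencil sZ E A l) z) \<le> K * norm z)"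

definition resolvent ::
  "(complex \<Rightarrow> 'b \<Rightarrow> 'b::banach) \<Rightarrow> ('a::banach \<Rightarrow> 'b) \<Rightarrow> 'a set \<Rightarrow> ('a \<Rightarrow> 'b) \<Rightarrow> complex \<Rightarrow> 'b \<Rightarrow> 'a" where
  "resolvent sZ E D A l = inv_into D (pencil sZ E A l)"

text \<open>(E,A) satisfies the resolvent growth bound with exponent n.
  (Since \<omega> may always be enlarged, the convention 0 powr a = 0 at \<lambda> = 0 is irrelevant.)\<close>
definition has_resolvent_index ::
  "(complex \<Rightarrow> 'b \<Rightarrow> 'b::banach) \<Rightarrow> ('a::banach \<Rightarrow> 'b) \<Rightarrow> 'a set \<Rightarrow> ('a \<Rightarrow> 'b) \<Rightarrow> nat \<Rightarrow> bool" where
  "has_resolvent_index sZ E D A n \<longleftrightarrow>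
     (\<exists>\<omega>::real. \<exists>C>0. \<forall>l. Re l > \<omega> \<longrightarrow>
        in_resolvent_set sZ E D A l \<and>
        onorm (resolvent sZ E D A l) \<le> C * cmod l powr (real n - 1))"

definition p_res ::
  "(complex \<Rightarrow> 'b \<Rightarrow> 'b::banach) \<Rightarrow> ('a::banach \<Rightarrow> 'b) \<Rightarrow> 'a set \<Rightarrow> ('a \<Rightarrow> 'b) \<Rightarrow> nat" where
  "p_res sZ E D A = (LEAST n. has_resolvent_index sZ E D A n)"

definition R_r ::
  "(complex \<Rightarrow> 'b \<Rightarrow> 'b::banach) \<Rightarrow> ('a::banach \<Rightarrow> 'b) \<Rightarrow> 'a set \<Rightarrow> ('a \<Rightarrow> 'b) \<Rightarrow> complex \<Rightarrow> 'a \<Rightarrow> 'a" where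
  "R_r sZ E D A l = resolvent sZ E D A l \<circ> E"

definition R_l ::
  "(complex \<Rightarrow> 'b \<Rightarrow> 'b::banach) \<Rightarrow> ('a::banach \<Rightarrow> 'b) \<Rightarrow> 'a set \<Rightarrow> ('a \<Rightarrow> 'b) \<Rightarrow> complex \<Rightarrow> 'b \<Rightarrow> 'b" where
  "R_l sZ E D A l = E \<circ> resolvent sZ E D A l"

end

theory Submission
  imports Defs
begin

(* Let q be the resolvent index.  The growth bound on the resolvent gives
   R(n) (E R(mu))^q z -> 0 as n -> oo, because by the resolvent identity each factor
   E R(mu) gains a factor 1/|n - mu|.  The identity (n - mu) R(n) E R(mu) v = R(mu) v - R(n) v
   then shows n R(n) E w -> w for w = R(mu) (E R(mu))^q z, and since R(n) commutes with
   R(mu) E this approximates w by elements of ran (R(mu) E)^(q+1).  Hence E maps X_ran onto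
   a dense subset of Z_ran, which is all of Z_ran when E(X_ran) is closed.  The kernel
   condition makes E injective on X_ran, and the bounded inverse theorem for an operator on a
   closed subspace with closed range, obtained from Baire category, bounds the inverse. *)

section \<open>Bounded inverses on closed ranges\<close>

lemma subspace_closure:
  fixes S :: "'a::real_normed_vector set"
  assumes "subspace S"
  shows "subspace (closure S)"
proof -
  have add: "(\<lambda>z. fst z + snd z) ` closure (S \<times> S) \<subseteq> closure S"
    by (rule image_closure_subset)
      (auto intro!: continuous_intros subspace_add[OF assms] closure_subset[THEN subsetD])
  have scale: "(\<lambda>x. c *\<^sub>R x) ` closure S \<subseteq> closure S" for c
    by (rule image_closure_subset)
      (auto intro!: continuous_intros subspace_scale[OF assms] closure_subset[THEN subsetD])
  have "x + y \<in> closure S" if "x \<in> closure S" "y \<in> closure S" for x y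
    using add[THEN subsetD, OF imageI[of "(x, y)"]] that by (simp add: closure_Times)
  moreover have "c *\<^sub>R x \<in> closure S" if "x \<in> closure S" for c x
    using scale[THEN subsetD, OF imageI] that by simp
  moreover have "0 \<in> closure S" using subspace_0[OF assms] closure_subset by blast
  ultimately show ?thesis by (simp add: subspace_def)
qed

lemma bounded_linear_funpow:
  fixes f :: "'a::real_normed_vector \<Rightarrow> 'a"
  assumes "bounded_linear f"
  shows "bounded_linear (f ^^ k)"
proof (induction k)
  case 0
  then show ?case by (simp add: id_def bounded_linear_ident)
next
  case (Suc k)
  then show ?case using bounded_linear_compose[OF assms] by (simp add: comp_def)
qed

lemma Baire_closed_cover:
  fixes F :: "'a::banach set"
  assumes "closed F" "F \<noteq> {}" "F \<subseteq> (\<Union>n. C n)" "\<And>n::nat. closed (C n)"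
  shows "\<exists>n y r. y \<in> F \<and> r > 0 \<and> F \<inter> ball y r \<subseteq> C n"
proof (rule ccontr)
  assume no_ball: "\<not> ?thesis"
  let ?X = "top_of_set F"
  have "?X interior_of \<Union> (range (\<lambda>n. F \<inter> C n)) = {}"
  proof (rule Baire_category_alt)
    show "completely_metrizable_space ?X \<or> locally_compact_space ?X \<and> regular_space ?X"
      using assms(1) completely_metrizable_space_closedin completely_metrizable_space_euclidean
        closed_closedin by blast
    fix T assume "T \<in> range (\<lambda>n. F \<inter> C n)"
    then obtain n where T: "T = F \<inter> C n" by blast
    have "?X interior_of T = {}"
    proof (rule ccontr)
      assume "?X interior_of T \<noteq> {}"
      then obtain y U where "openin ?X U" "y \<in> U" "U \<subseteq> T"
        unfolding interior_of_def by blast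
      then obtain V where "open V" "y \<in> V" "y \<in> F" "F \<inter> V \<subseteq> C n"
        unfolding openin_open T by blast
      then obtain r where "r > 0" "ball y r \<subseteq> V" by (meson open_contains_ball_eq)
      with \<open>y \<in> F\<close> \<open>F \<inter> V \<subseteq> C n\<close> no_ball show False by blast
    qed
    then show "closedin ?X T \<and> ?X interior_of T = {}"
      using assms(4) T by (simp add: closedin_closed_Int)
  qed simp
  moreover have "\<Union> (range (\<lambda>n. F \<inter> C n)) = F" using assms(3) by blast
  ultimately show False using assms(2) interior_of_topspace[of ?X] by simp
qed

lemma closure_image_cball_diff:
  fixes T :: "'a::real_normed_vector \<Rightarrow> 'b::real_normed_vector"
  assumes "linear T" "subspace S"
    and "u \<in> closure (T ` (S \<inter> cball 0 c))" "v \<in> closure (T ` (S \<inter> cball 0 c))"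
  shows "v - u \<in> closure (T ` (S \<inter> cball 0 (2 * c)))"
proof -
  let ?B = "\<lambda>c. T ` (S \<inter> cball 0 c)"
  have diff: "(\<lambda>z. snd z - fst z) ` closure (?B c \<times> ?B c) \<subseteq> closure (?B (2 * c))"
  proof (rule image_closure_subset)
    have "T y - T x \<in> ?B (2 * c)" if "x \<in> S \<inter> cball 0 c" "y \<in> S \<inter> cball 0 c" for x y
    proof
      show "T y - T x = T (y - x)" using linear_diff[OF assms(1)] by simp
      show "y - x \<in> S \<inter> cball 0 (2 * c)"
        using that subspace_diff[OF assms(2)] norm_triangle_ineq4[of y x] by auto
    qed
    then show "(\<lambda>z. snd z - fst z) ` (?B c \<times> ?B c) \<subseteq> closure (?B (2 * c))"
      using closure_subset by fastforce
  qed (auto intro!: continuous_intros)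
  show ?thesis
    using diff[THEN subsetD, OF imageI[of "(u, v)"]] assms(3,4) by (simp add: closure_Times)
qed

lemma closure_image_cball_scale:
  fixes T :: "'a::real_normed_vector \<Rightarrow> 'b::real_normed_vector"
  assumes "linear T" "subspace S" "a \<ge> 0"
    and "y \<in> closure (T ` (S \<inter> cball 0 c))"
  shows "a *\<^sub>R y \<in> closure (T ` (S \<inter> cball 0 (a * c)))"
proof -
  have "(\<lambda>y. a *\<^sub>R y) ` closure (T ` (S \<inter> cball 0 c)) \<subseteq> closure (T ` (S \<inter> cball 0 (a * c)))"
  proof (rule image_closure_subset)
    have "a *\<^sub>R T x \<in> T ` (S \<inter> cball 0 (a * c))" if "x \<in> S \<inter> cball 0 c" for x
    proof
      show "a *\<^sub>R T x = T (a *\<^sub>R x)" using linear_scale[OF assms(1)] by simp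
      have "norm (a *\<^sub>R x) \<le> a * c" using that assms(3) by (simp add: mult_left_mono)
      then show "a *\<^sub>R x \<in> S \<inter> cball 0 (a * c)"
        using that subspace_scale[OF assms(2)] by simp
    qed
    then show "(\<lambda>y. a *\<^sub>R y) ` T ` (S \<inter> cball 0 c) \<subseteq> closure (T ` (S \<inter> cball 0 (a * c)))"
      using closure_subset by fastforce
  qed (auto intro!: continuous_intros)
  then show ?thesis using assms(4) by blast
qed

lemma almost_open_on_closed_range:
  fixes T :: "'a::banach \<Rightarrow> 'b::banach"
  assumes T: "bounded_linear T" and S: "subspace S" and closed_range: "closed (T ` S)"
  shows "\<exists>M\<ge>0. \<forall>y\<in>T ` S. y \<in> closure (T ` (S \<inter> cball 0 (M * norm y)))"
proof -
  let ?B = "\<lambda>c. closure (T ` (S \<inter> cball 0 c))"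
  have lin: "linear T" using T bounded_linear.linear by blast
  have "T ` S \<subseteq> (\<Union>n. ?B (real n))"
  proof
    fix y assume "y \<in> T ` S"
    then obtain x where "x \<in> S" "y = T x" by blast
    moreover obtain n where "norm x \<le> real n" using real_arch_simple by blast
    ultimately show "y \<in> (\<Union>n. ?B (real n))" using closure_subset by fastforce
  qed
  moreover have "T ` S \<noteq> {}" using subspace_0[OF S] by blast
  ultimately obtain n y0 r where y0: "y0 \<in> T ` S" and r: "r > 0"
    and ball: "T ` S \<inter> ball y0 r \<subseteq> ?B (real n)"
    using Baire_closed_cover[OF closed_range] by (metis closed_closure)
  have small: "y \<in> ?B (2 * real n)" if "y \<in> T ` S" "norm y < r" for y
  proof -
    have "y0 + y \<in> T ` S"
      using y0 that(1) linear_subspace_image[OF lin S] subspace_add by blast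
    moreover have "y0 + y \<in> ball y0 r" using that(2) by (simp add: dist_norm)
    ultimately have "y0 + y \<in> ?B (real n)" using ball by blast
    moreover have "y0 \<in> ?B (real n)" using ball y0 r by auto
    ultimately show ?thesis using closure_image_cball_diff[OF lin S] by fastforce
  qed
  show ?thesis
  proof (intro exI conjI ballI)
    show "4 * real n / r \<ge> 0" using r by simp
    fix y assume y: "y \<in> T ` S"
    define a where "a = 2 * norm y / r"
    have a: "a \<ge> 0" using r by (simp add: a_def)
    have "inverse a *\<^sub>R y \<in> T ` S"
      using y linear_subspace_image[OF lin S] subspace_scale by blast
    moreover have "norm (inverse a *\<^sub>R y) < r"
      using r by (cases "y = 0") (auto simp: a_def)
    ultimately have "a *\<^sub>R (inverse a *\<^sub>R y) \<in> ?B (a * (2 * real n))"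
      using closure_image_cball_scale[OF lin S a] small by blast
    moreover have "a *\<^sub>R (inverse a *\<^sub>R y) = y" using r by (cases "y = 0") (auto simp: a_def)
    moreover have "a * (2 * real n) = 4 * real n / r * norm y" by (simp add: a_def)
    ultimately show "y \<in> ?B (4 * real n / r * norm y)" by simp
  qed
qed

lemma telescoping_series_preimage:
  fixes T :: "'a::banach \<Rightarrow> 'b::real_normed_vector"
  assumes T: "bounded_linear T" and S: "subspace S" "closed S"
    and xs: "\<And>k. xs k \<in> S" "\<And>k. norm (xs k) \<le> c * (1 / 2) ^ k"
    and f: "\<And>k. f (Suc k) = f k - T (xs k)" "f \<longlonglongrightarrow> 0"
  shows "suminf xs \<in> S \<and> T (suminf xs) = f 0 \<and> norm (suminf xs) \<le> 2 * c"
proof -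
  have geometric: "summable (\<lambda>k. c * (1 / 2 :: real) ^ k)"
    by (intro summable_mult summable_geometric) simp
  have norm_summable: "summable (\<lambda>k. norm (xs k))"
    by (rule summable_comparison_test'[OF geometric]) (use xs(2) in simp)
  then have sums: "xs sums suminf xs" by (rule summable_sums[OF summable_norm_cancel])
  have partial: "(\<Sum>k<m. T (xs k)) = f 0 - f m" for m
    by (induction m) (simp_all add: f(1))
  have "(\<lambda>m. \<Sum>k<m. T (xs k)) \<longlonglongrightarrow> f 0 - 0"
    unfolding partial by (intro tendsto_diff tendsto_const f(2))
  then have "(\<lambda>k. T (xs k)) sums f 0" by (simp add: sums_def)
  then have "T (suminf xs) = f 0"
    using bounded_linear.sums[OF T sums] sums_unique2 by blast
  moreover have "suminf xs \<in> S"
  proof (rule Lim_in_closed_set[OF S(2)])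
    show "\<forall>\<^sub>F m in sequentially. (\<Sum>k<m. xs k) \<in> S"
      by (intro always_eventually allI subspace_sum[OF S(1)] xs(1))
    show "(\<lambda>m. \<Sum>k<m. xs k) \<longlonglongrightarrow> suminf xs" using sums sums_def by blast
  qed simp
  moreover have "norm (suminf xs) \<le> 2 * c"
  proof -
    have "norm (suminf xs) \<le> (\<Sum>k. norm (xs k))" by (rule summable_norm[OF norm_summable])
    also have "\<dots> \<le> (\<Sum>k. c * (1 / 2) ^ k)" by (rule suminf_le[OF xs(2) norm_summable geometric])
    also have "\<dots> = c * (\<Sum>k. (1 / 2 :: real) ^ k)" by (rule suminf_mult[OF summable_geometric]) simp
    also have "\<dots> = 2 * c" by (simp add: suminf_geometric)
    finally show ?thesis .
  qed
  ultimately show ?thesis by blast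
qed

lemma preimage_by_successive_approximation:
  fixes T :: "'a::banach \<Rightarrow> 'b::real_normed_vector"
  assumes T: "bounded_linear T" and S: "subspace S" "closed S" and M: "M \<ge> 0"
    and halving: "\<forall>u\<in>T ` S. \<exists>x. x \<in> S \<and> norm x \<le> M * norm u \<and> norm (u - T x) \<le> norm u / 2"
    and y: "y \<in> T ` S"
  shows "\<exists>x\<in>S. T x = y \<and> norm x \<le> 2 * M * norm y"
proof -
  have range: "subspace (T ` S)" by (rule linear_subspace_image[OF bounded_linear.linear[OF T] S(1)])
  obtain g where g: "\<And>u. u \<in> T ` S \<Longrightarrow>
      g u \<in> S \<and> norm (g u) \<le> M * norm u \<and> norm (u - T (g u)) \<le> norm u / 2"
    using bchoice[OF halving] by blast
  define f where "f k = ((\<lambda>u. u - T (g u)) ^^ k) y" for k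
  have f_Suc: "f (Suc k) = f k - T (g (f k))" for k by (simp add: f_def)
  have f_range: "f k \<in> T ` S" for k
  proof (induction k)
    case (Suc k)
    then show ?case using g subspace_diff[OF range] unfolding f_Suc by blast
  qed (simp add: f_def y)
  have f_bound: "norm (f k) \<le> norm y * (1 / 2) ^ k" for k
  proof (induction k)
    case (Suc k)
    then show ?case using g[OF f_range[of k]] unfolding f_Suc by simp
  qed (simp add: f_def)
  have "suminf (\<lambda>k. g (f k)) \<in> S \<and> T (suminf (\<lambda>k. g (f k))) = f 0
      \<and> norm (suminf (\<lambda>k. g (f k))) \<le> 2 * (M * norm y)"
  proof (rule telescoping_series_preimage[OF T S])
    show "g (f k) \<in> S" for k using g[OF f_range[of k]] by blast
    show "norm (g (f k)) \<le> M * norm y * (1 / 2) ^ k" for k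
      using g[OF f_range[of k]] mult_left_mono[OF f_bound[of k] M] by simp
    show "f (Suc k) = f k - T (g (f k))" for k by (rule f_Suc)
    show "f \<longlonglongrightarrow> 0"
    proof (rule Lim_null_comparison)
      show "\<forall>\<^sub>F k in sequentially. norm (f k) \<le> norm y * (1 / 2) ^ k" using f_bound by simp
      show "(\<lambda>k. norm y * (1 / 2 :: real) ^ k) \<longlonglongrightarrow> 0"
        by (intro tendsto_mult_right_zero LIMSEQ_power_zero) simp
    qed
  qed
  then show ?thesis by (auto simp: f_def)
qed

theorem bounded_preimage_on_closed_range:
  fixes T :: "'a::banach \<Rightarrow> 'b::banach"
  assumes T: "bounded_linear T" and S: "subspace S" "closed S" and closed_range: "closed (T ` S)"
  shows "\<exists>K. \<forall>y\<in>T ` S. \<exists>x\<in>S. T x = y \<and> norm x \<le> K * norm y"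
proof -
  obtain M where M: "M \<ge> 0"
    and approx: "\<And>y. y \<in> T ` S \<Longrightarrow> y \<in> closure (T ` (S \<inter> cball 0 (M * norm y)))"
    using almost_open_on_closed_range[OF T S(1) closed_range] by blast
  have "\<forall>u\<in>T ` S. \<exists>x. x \<in> S \<and> norm x \<le> M * norm u \<and> norm (u - T x) \<le> norm u / 2"
  proof
    fix u assume u: "u \<in> T ` S"
    show "\<exists>x. x \<in> S \<and> norm x \<le> M * norm u \<and> norm (u - T x) \<le> norm u / 2"
    proof (cases "u = 0")
      case True
      then show ?thesis using subspace_0[OF S(1)] linear_0[OF bounded_linear.linear[OF T]] by force
    next
      case False
      then have "norm u / 2 > 0" by simp
      then obtain v where "v \<in> T ` (S \<inter> cball 0 (M * norm u))" "dist v u < norm u / 2"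
        using approx[OF u] unfolding closure_approachable by blast
      then show ?thesis by (auto simp: dist_norm norm_minus_commute)
    qed
  qed
  then have "\<forall>y\<in>T ` S. \<exists>x\<in>S. T x = y \<and> norm x \<le> 2 * M * norm y"
    using preimage_by_successive_approximation[OF T S M] by blast
  then show ?thesis by blast
qed

corollary bounded_inverse_on_closed_range:
  fixes T :: "'a::banach \<Rightarrow> 'b::banach"
  assumes "bounded_linear T" "subspace S" "closed S" "closed (T ` S)" "inj_on T S"
  shows "\<exists>K. \<forall>y\<in>T ` S. norm (inv_into S T y) \<le> K * norm y"
  using bounded_preimage_on_closed_range[OF assms(1-4)] by (metis assms(5) inv_into_f_f)

section \<open>Complex scalings\<close>

lemma complex_scaling_of_real: "complex_scaling s \<Longrightarrow> s (complex_of_real r) x = r *\<^sub>R x"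
  and complex_scaling_add_left: "complex_scaling s \<Longrightarrow> s (a + b) x = s a x + s b x"
  and complex_scaling_add_right: "complex_scaling s \<Longrightarrow> s a (x + y) = s a x + s a y"
  and complex_scaling_mult: "complex_scaling s \<Longrightarrow> s (a * b) x = s a (s b x)"
  and complex_scaling_norm: "complex_scaling s \<Longrightarrow> norm (s a x) = cmod a * norm x"
  unfolding complex_scaling_def by auto

lemma complex_scaling_bounded_linear:
  assumes "complex_scaling s"
  shows "bounded_linear (s c)"
proof (rule bounded_linear_intro)
  show "s c (x + y) = s c x + s c y" for x y by (rule complex_scaling_add_right[OF assms])
  show "s c (r *\<^sub>R x) = r *\<^sub>R s c x" for r x
    using complex_scaling_mult[OF assms, of c "complex_of_real r" x]
      complex_scaling_mult[OF assms, of "complex_of_real r" c x]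
    by (simp add: complex_scaling_of_real[OF assms] mult.commute)
  show "norm (s c x) \<le> norm x * cmod c" for x by (simp add: complex_scaling_norm[OF assms])
qed

lemma complex_scaling_uminus_left:
  assumes "complex_scaling s"
  shows "s (- a) x = - s a x"
  using complex_scaling_add_left[OF assms, of "- a" a x] complex_scaling_of_real[OF assms, of 0 x]
  by (simp add: eq_neg_iff_add_eq_0)

lemma complex_scaling_cancel:
  assumes "complex_scaling s" "c \<noteq> 0" "s c x = s c y"
  shows "x = y"
proof -
  have "cmod c * norm (x - y) = 0"
    using assms(3) linear_diff[OF bounded_linear.linear[OF complex_scaling_bounded_linear[OF assms(1)]]]
    by (metis complex_scaling_norm[OF assms(1)] norm_zero right_minus_eq)
  then show ?thesis using assms(2) by simp
qed

section \<open>Resolvents of the pencil\<close>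

lemma cmod_of_nat_diff_at_top: "filterlim (\<lambda>n. cmod (of_nat n - m)) at_top sequentially"
proof (rule filterlim_at_top_mono)
  show "filterlim (\<lambda>n. - cmod m + real n) at_top sequentially"
    by (rule filterlim_tendsto_add_at_top[OF tendsto_const filterlim_real_sequentially])
  show "\<forall>\<^sub>F n in sequentially. - cmod m + real n \<le> cmod (of_nat n - m)"
    using norm_triangle_ineq2[of "of_nat n" m for n] by simp
qed

lemma eventually_cmod_of_nat_diff_pos: "\<forall>\<^sub>F n in sequentially. 0 < cmod (of_nat n - m)"
  using cmod_of_nat_diff_at_top[of m] unfolding filterlim_at_top_dense by blast

lemma eventually_cmod_of_nat_diff_ge: "\<forall>\<^sub>F n in sequentially. real n / 2 \<le> cmod (of_nat n - m)"
proof -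
  obtain N :: nat where "2 * cmod m \<le> real N" using real_arch_simple by blast
  then have "real n / 2 \<le> cmod (of_nat n - m)" if "n \<ge> N" for n
    using that norm_triangle_ineq2[of "of_nat n" m] by simp
  then show ?thesis by (rule eventually_sequentiallyI)
qed

locale operator_pencil =
  fixes sX :: "complex \<Rightarrow> 'x::banach \<Rightarrow> 'x" and sZ :: "complex \<Rightarrow> 'z::banach \<Rightarrow> 'z"
    and E :: "'x \<Rightarrow> 'z" and D :: "'x set" and A :: "'x \<Rightarrow> 'z"
  assumes scaling_X: "complex_scaling sX" and scaling_Z: "complex_scaling sZ"
    and E_op: "bounded_clinear_op sX sZ E"
    and A_op: "closed_densely_defined sX sZ D A"
begin

abbreviation "P \<equiv> pencil sZ E A"
abbreviation "R \<equiv> resolvent sZ E D A"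
abbreviation "in_rho \<equiv> in_resolvent_set sZ E D A"

lemma bounded_linear_E: "bounded_linear E"
  and E_scale: "E (sX c x) = sZ c (E x)"
  using E_op unfolding bounded_clinear_op_def by auto

lemma dom_add: "x \<in> D \<Longrightarrow> y \<in> D \<Longrightarrow> x + y \<in> D"
  and dom_scale: "x \<in> D \<Longrightarrow> sX c x \<in> D"
  and A_add: "x \<in> D \<Longrightarrow> y \<in> D \<Longrightarrow> A (x + y) = A x + A y"
  and A_scale: "x \<in> D \<Longrightarrow> A (sX c x) = sZ c (A x)"
  using A_op unfolding closed_densely_defined_def by auto

lemma pencil_add: "x \<in> D \<Longrightarrow> y \<in> D \<Longrightarrow> P l (x + y) = P l x + P l y"
  using A_add linear_add[OF bounded_linear.linear[OF bounded_linear_E]]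
    complex_scaling_add_right[OF scaling_Z]
  by (simp add: pencil_def algebra_simps)

lemma pencil_scale:
  assumes "x \<in> D"
  shows "P l (sX c x) = sZ c (P l x)"
proof -
  have "sZ l (sZ c (E x)) = sZ c (sZ l (E x))"
    by (metis complex_scaling_mult[OF scaling_Z] mult.commute)
  then show ?thesis
    using assms A_scale E_scale
      linear_diff[OF bounded_linear.linear[OF complex_scaling_bounded_linear[OF scaling_Z]]]
    by (simp add: pencil_def)
qed

lemma resolvent_in_dom: "in_rho l \<Longrightarrow> R l z \<in> D"
  and pencil_resolvent: "in_rho l \<Longrightarrow> P l (R l z) = z"
  and resolvent_pencil: "in_rho l \<Longrightarrow> x \<in> D \<Longrightarrow> R l (P l x) = x"
  unfolding in_resolvent_set_def resolvent_def bij_betw_def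
  by (auto intro: inv_into_into f_inv_into_f inv_into_f_f)

lemma resolvent_add: "in_rho l \<Longrightarrow> R l (z + w) = R l z + R l w"
  by (metis pencil_add pencil_resolvent resolvent_in_dom resolvent_pencil dom_add)

lemma resolvent_scale: "in_rho l \<Longrightarrow> R l (sZ c z) = sX c (R l z)"
  by (metis pencil_scale pencil_resolvent resolvent_in_dom resolvent_pencil dom_scale)

lemma bounded_linear_resolvent:
  assumes "in_rho l"
  shows "bounded_linear (R l)"
proof -
  obtain K where K: "\<And>z. norm (R l z) \<le> K * norm z"
    using assms unfolding in_resolvent_set_def resolvent_def by blast
  show ?thesis
  proof (rule bounded_linear_intro)
    show "R l (z + w) = R l z + R l w" for z w by (rule resolvent_add[OF assms])
    show "R l (r *\<^sub>R z) = r *\<^sub>R R l z" for r z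
      using resolvent_scale[OF assms, of "complex_of_real r" z]
      by (simp add: complex_scaling_of_real[OF scaling_X] complex_scaling_of_real[OF scaling_Z])
    show "norm (R l z) \<le> norm z * K" for z using K[of z] by (simp add: mult.commute)
  qed
qed

lemma resolvent_identity:
  assumes l: "in_rho l" and m: "in_rho m"
  shows "sX (l - m) (R l (E (R m v))) = R m v - R l v"
proof -
  have "P l (R m v) = sZ (l - m) (E (R m v)) + v"
    using pencil_resolvent[OF m, of v] complex_scaling_add_left[OF scaling_Z, of "l - m" m]
    by (simp add: pencil_def algebra_simps)
  moreover have "R l (P l (R m v)) = R m v"
    by (rule resolvent_pencil[OF l resolvent_in_dom[OF m]])
  ultimately have "R l (sZ (l - m) (E (R m v)) + v) = R m v" by simp
  then show ?thesis by (simp add: resolvent_add[OF l] resolvent_scale[OF l] eq_diff_eq)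
qed

lemma resolvent_commute:
  assumes l: "in_rho l" and m: "in_rho m" and "l \<noteq> m"
  shows "R l (E (R m v)) = R m (E (R l v))"
proof (rule complex_scaling_cancel[OF scaling_X])
  show "l - m \<noteq> 0" using assms(3) by simp
  have "sX (l - m) (R m (E (R l v))) = - sX (m - l) (R m (E (R l v)))"
    using complex_scaling_uminus_left[OF scaling_X, of "m - l"] by simp
  then show "sX (l - m) (R l (E (R m v))) = sX (l - m) (R m (E (R l v)))"
    using resolvent_identity[OF l m, of v] resolvent_identity[OF m l, of v] by simp
qed

lemma resolvent_commute_funpow:
  assumes "in_rho l" "in_rho m" "l \<noteq> m"
  shows "R l (((E \<circ> R m) ^^ k) z) = ((R m \<circ> E) ^^ k) (R l z)"
  by (induction k) (simp_all add: resolvent_commute[OF assms])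

lemma bounded_linear_resolvent_E: "in_rho m \<Longrightarrow> bounded_linear (R m \<circ> E)"
  using bounded_linear_compose[OF bounded_linear_resolvent bounded_linear_E] by (simp add: comp_def)

lemma eventually_resolvent_bound:
  assumes "has_resolvent_index sZ E D A q"
  obtains C where "C > 0" and "\<forall>\<^sub>F n in sequentially.
    in_rho (of_nat n) \<and> onorm (R (of_nat n)) \<le> C * real n powr (real q - 1)"
proof -
  obtain \<omega> C where "C > 0"
    and bound: "\<And>l. Re l > \<omega> \<Longrightarrow> in_rho l \<and> onorm (R l) \<le> C * cmod l powr (real q - 1)"
    using assms unfolding has_resolvent_index_def by blast
  moreover have "\<forall>\<^sub>F n in sequentially. \<omega> < real n"
    using filterlim_real_sequentially unfolding filterlim_at_top_dense by blast
  then have "\<forall>\<^sub>F n in sequentially.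
      in_rho (of_nat n) \<and> onorm (R (of_nat n)) \<le> C * real n powr (real q - 1)"
  proof eventually_elim
    case (elim n)
    then show ?case using bound[of "of_nat n"] by simp
  qed
  ultimately show ?thesis using that by blast
qed

lemma eventually_in_resolvent_set:
  assumes "has_resolvent_index sZ E D A q"
  shows "\<forall>\<^sub>F n in sequentially. in_rho (of_nat n)"
proof -
  obtain C where "\<forall>\<^sub>F n in sequentially.
      in_rho (of_nat n) \<and> onorm (R (of_nat n)) \<le> C * real n powr (real q - 1)"
    using eventually_resolvent_bound[OF assms] by blast
  then show ?thesis by (rule eventually_mono) simp
qed

lemma resolvent_decay:
  assumes "has_resolvent_index sZ E D A q"
  shows "(\<lambda>n. norm (R (of_nat n) z) / cmod (of_nat n - m) ^ q) \<longlonglongrightarrow> 0"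
proof -
  obtain C where C: "C > 0" and ev: "\<forall>\<^sub>F n in sequentially.
      in_rho (of_nat n) \<and> onorm (R (of_nat n)) \<le> C * real n powr (real q - 1)"
    using eventually_resolvent_bound[OF assms] by blast
  show ?thesis
  proof (rule Lim_null_comparison)
    show "(\<lambda>n. C * norm z * 2 ^ q / real n) \<longlonglongrightarrow> 0"
      by (intro tendsto_divide_0[OF tendsto_const] filterlim_at_top_imp_at_infinity
          filterlim_real_sequentially)
    show "\<forall>\<^sub>F n in sequentially.
        norm (norm (R (of_nat n) z) / cmod (of_nat n - m) ^ q) \<le> C * norm z * 2 ^ q / real n"
      using ev eventually_cmod_of_nat_diff_ge[of m] eventually_gt_at_top[of 0]
    proof eventually_elim
      case (elim n)
      then have n: "real n > 0" by simp
      have "norm (R (of_nat n) z) \<le> onorm (R (of_nat n)) * norm z"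
        using onorm[OF bounded_linear_resolvent] elim by blast
      also have "\<dots> \<le> C * real n powr (real q - 1) * norm z"
        using elim by (simp add: mult_right_mono)
      also have "real n powr (real q - 1) = real n ^ q / real n"
        using n by (simp add: powr_diff powr_realpow)
      finally have "norm (R (of_nat n) z) \<le> C * (real n ^ q / real n) * norm z" .
      moreover have "(real n / 2) ^ q \<le> cmod (of_nat n - m) ^ q"
        using elim n by (intro power_mono) auto
      ultimately have "norm (R (of_nat n) z) / cmod (of_nat n - m) ^ q
          \<le> C * (real n ^ q / real n) * norm z / (real n / 2) ^ q"
        using C n by (intro frac_le) auto
      also have "\<dots> = C * norm z * 2 ^ q / real n"
        using n by (simp add: power_divide field_simps)
      finally show ?case by simp
    qed
  qed
qed

lemma resolvent_funpow_decay:
  assumes q: "has_resolvent_index sZ E D A q" and m: "in_rho m" and "k \<le> q"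
  shows "(\<lambda>n. norm (R (of_nat n) (((E \<circ> R m) ^^ k) z)) / cmod (of_nat n - m) ^ (q - k))
    \<longlonglongrightarrow> 0"
  using \<open>k \<le> q\<close>
proof (induction k)
  case 0
  then show ?case using resolvent_decay[OF q] by simp
next
  case (Suc k)
  define v where "v = ((E \<circ> R m) ^^ k) z"
  let ?d = "\<lambda>n. cmod (of_nat n - m)"
  have rho: "\<forall>\<^sub>F n in sequentially. in_rho (of_nat n)" by (rule eventually_in_resolvent_set[OF q])
  have IH: "(\<lambda>n. norm (R (of_nat n) v) / ?d n ^ (q - k)) \<longlonglongrightarrow> 0"
    unfolding v_def by (rule Suc.IH[OF Suc_leD[OF Suc.prems]])
  show ?case
  proof (rule Lim_null_comparison)
    show "(\<lambda>n. norm (R m v) / ?d n ^ (q - k) + norm (R (of_nat n) v) / ?d n ^ (q - k)) \<longlonglongrightarrow> 0"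
      using Suc.prems by (intro tendsto_add_zero tendsto_divide_0[OF tendsto_const]
          filterlim_at_top_imp_at_infinity filterlim_pow_at_top cmod_of_nat_diff_at_top IH) simp
    show "\<forall>\<^sub>F n in sequentially. norm (norm (R (of_nat n) (((E \<circ> R m) ^^ Suc k) z)) / ?d n ^ (q - Suc k))
        \<le> norm (R m v) / ?d n ^ (q - k) + norm (R (of_nat n) v) / ?d n ^ (q - k)"
      using rho eventually_cmod_of_nat_diff_pos[of m]
    proof eventually_elim
      case (elim n)
      have "?d n * norm (R (of_nat n) (E (R m v))) = norm (R m v - R (of_nat n) v)"
        using resolvent_identity[OF elim(1) m, of v] complex_scaling_norm[OF scaling_X] by metis
      also have "\<dots> \<le> norm (R m v) + norm (R (of_nat n) v)" by (rule norm_triangle_ineq4)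
      finally have ineq: "?d n * norm (R (of_nat n) (E (R m v)))
          \<le> norm (R m v) + norm (R (of_nat n) v)" .
      have "q - k = Suc (q - Suc k)" using Suc.prems by simp
      then have "norm (R (of_nat n) (E (R m v))) / ?d n ^ (q - Suc k)
          = ?d n * norm (R (of_nat n) (E (R m v))) / ?d n ^ (q - k)"
        using elim(2) by simp
      also have "\<dots> \<le> (norm (R m v) + norm (R (of_nat n) v)) / ?d n ^ (q - k)"
        using ineq elim(2) by (simp add: divide_right_mono)
      finally have "norm (R (of_nat n) (E (R m v))) / ?d n ^ (q - Suc k)
          \<le> (norm (R m v) + norm (R (of_nat n) v)) / ?d n ^ (q - k)" .
      then show ?case by (simp add: v_def add_divide_distrib)
    qed
  qed
qed

corollary resolvent_funpow_tendsto_zero: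
  assumes "has_resolvent_index sZ E D A q" and "in_rho m"
  shows "(\<lambda>n. R (of_nat n) (((E \<circ> R m) ^^ q) z)) \<longlonglongrightarrow> 0"
  using resolvent_funpow_decay[OF assms order_refl] by (simp add: tendsto_norm_zero_iff)

lemma scaled_resolvent_tendsto:
  assumes rho: "\<forall>\<^sub>F n in sequentially. in_rho (of_nat n)" and m: "in_rho m"
    and v: "(\<lambda>n. R (of_nat n) v) \<longlonglongrightarrow> 0"
  shows "(\<lambda>n. real n *\<^sub>R R (of_nat n) (E (R m v))) \<longlonglongrightarrow> R m v"
proof -
  define b where "b n = R (of_nat n) (E (R m v))" for n :: nat
  let ?d = "\<lambda>n. cmod (of_nat n - m)"
  have identity: "\<forall>\<^sub>F n in sequentially. sX (of_nat n - m) (b n) = R m v - R (of_nat n) v"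
    using rho by eventually_elim (simp add: b_def resolvent_identity[OF _ m])
  have "b \<longlonglongrightarrow> 0"
  proof (rule Lim_null_comparison)
    show "\<forall>\<^sub>F n in sequentially. norm (b n) \<le> norm (R m v - R (of_nat n) v) / ?d n"
      using identity eventually_cmod_of_nat_diff_pos[of m]
    proof eventually_elim
      case (elim n)
      then have "?d n * norm (b n) = norm (R m v - R (of_nat n) v)"
        using complex_scaling_norm[OF scaling_X] by metis
      then show ?case using elim(2) by (simp add: field_simps)
    qed
    show "(\<lambda>n. norm (R m v - R (of_nat n) v) / ?d n) \<longlonglongrightarrow> 0"
      by (intro tendsto_divide_0[OF tendsto_norm[OF tendsto_diff[OF tendsto_const v]]]
          filterlim_at_top_imp_at_infinity cmod_of_nat_diff_at_top)
  qed
  have "\<forall>\<^sub>F n in sequentially. (R m v - R (of_nat n) v) + sX m (b n) = real n *\<^sub>R b n"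
    using identity
  proof eventually_elim
    case (elim n)
    have "real n *\<^sub>R b n = sX (of_nat n - m) (b n) + sX m (b n)"
      using complex_scaling_of_real[OF scaling_X, of "real n" "b n"]
        complex_scaling_add_left[OF scaling_X, of "of_nat n - m" m "b n"] by simp
    then show ?case using elim by simp
  qed
  moreover have "(\<lambda>n. (R m v - R (of_nat n) v) + sX m (b n)) \<longlonglongrightarrow> (R m v - 0) + 0"
    by (intro tendsto_add tendsto_diff tendsto_const v \<open>b \<longlonglongrightarrow> 0\<close>
        bounded_linear.tendsto_zero[OF complex_scaling_bounded_linear[OF scaling_X]])
  ultimately show ?thesis unfolding b_def using Lim_transform_eventually by fastforce
qed

lemma resolvent_funpow_in_closure_range:
  assumes q: "has_resolvent_index sZ E D A q" and m: "in_rho m"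
  shows "R m (((E \<circ> R m) ^^ q) z) \<in> closure (range ((R m \<circ> E) ^^ Suc q))"
proof -
  define v where "v = ((E \<circ> R m) ^^ q) z"
  have rho: "\<forall>\<^sub>F n in sequentially. in_rho (of_nat n)" by (rule eventually_in_resolvent_set[OF q])
  have linear_power: "linear ((R m \<circ> E) ^^ Suc q)"
    by (intro bounded_linear.linear bounded_linear_funpow bounded_linear_resolvent_E m)
  have "\<forall>\<^sub>F n in sequentially.
      real n *\<^sub>R R (of_nat n) (E (R m v)) \<in> closure (range ((R m \<circ> E) ^^ Suc q))"
    using rho eventually_cmod_of_nat_diff_pos[of m]
  proof eventually_elim
    case (elim n)
    have "((E \<circ> R m) ^^ Suc q) z = E (R m v)" by (simp add: v_def)
    moreover have "R (of_nat n) (((E \<circ> R m) ^^ Suc q) z) = ((R m \<circ> E) ^^ Suc q) (R (of_nat n) z)"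
      using elim by (intro resolvent_commute_funpow m) auto
    ultimately have "real n *\<^sub>R R (of_nat n) (E (R m v)) = ((R m \<circ> E) ^^ Suc q) (real n *\<^sub>R R (of_nat n) z)"
      by (simp only: linear_scale[OF linear_power])
    then have "real n *\<^sub>R R (of_nat n) (E (R m v)) \<in> range ((R m \<circ> E) ^^ Suc q)"
      by (rule range_eqI)
    then show ?case by (rule closure_subset[THEN subsetD])
  qed
  moreover have "(\<lambda>n. real n *\<^sub>R R (of_nat n) (E (R m v))) \<longlonglongrightarrow> R m v"
    using scaled_resolvent_tendsto[OF rho m resolvent_funpow_tendsto_zero[OF q m]] by (simp add: v_def)
  ultimately show ?thesis unfolding v_def by (intro Lim_in_closed_set closed_closure) auto
qed

lemma image_E_closure_range:
  assumes q: "has_resolvent_index sZ E D A q" and m: "in_rho m"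
    and closed_image: "closed (E ` closure (range ((R m \<circ> E) ^^ Suc q)))"
  shows "E ` closure (range ((R m \<circ> E) ^^ Suc q)) = closure (range ((E \<circ> R m) ^^ Suc q))"
proof
  have E_funpow: "E (((R m \<circ> E) ^^ k) x) = ((E \<circ> R m) ^^ k) (E x)" for k x
    by (induction k) auto
  show "E ` closure (range ((R m \<circ> E) ^^ Suc q)) \<subseteq> closure (range ((E \<circ> R m) ^^ Suc q))"
  proof (rule image_closure_subset)
    show "E ` range ((R m \<circ> E) ^^ Suc q) \<subseteq> closure (range ((E \<circ> R m) ^^ Suc q))"
    proof clarify
      fix x
      show "E (((R m \<circ> E) ^^ Suc q) x) \<in> closure (range ((E \<circ> R m) ^^ Suc q))"
        unfolding E_funpow by (rule closure_subset[THEN subsetD, OF rangeI])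
    qed
  qed (auto intro: linear_continuous_on bounded_linear_E)
  show "closure (range ((E \<circ> R m) ^^ Suc q)) \<subseteq> E ` closure (range ((R m \<circ> E) ^^ Suc q))"
  proof (rule closure_minimal[OF _ closed_image])
    show "range ((E \<circ> R m) ^^ Suc q) \<subseteq> E ` closure (range ((R m \<circ> E) ^^ Suc q))"
      using resolvent_funpow_in_closure_range[OF q m] by auto
  qed
qed

lemma inj_on_E:
  assumes m: "in_rho m" and S: "subspace S"
    and kernel: "S \<inter> {x. ((R m \<circ> E) ^^ Suc k) x = 0} = {0}"
  shows "inj_on E S"
proof (rule inj_onI)
  fix x y assume x: "x \<in> S" and y: "y \<in> S" and "E x = E y"
  have "(R m \<circ> E) (x - y) = (R m \<circ> E) x - (R m \<circ> E) y"
    by (rule linear_diff[OF bounded_linear.linear[OF bounded_linear_resolvent_E[OF m]]])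
  then have "(R m \<circ> E) (x - y) = 0" using \<open>E x = E y\<close> by simp
  then have "((R m \<circ> E) ^^ Suc k) (x - y) = 0"
    using linear_0[OF bounded_linear.linear[OF bounded_linear_funpow[OF bounded_linear_resolvent_E[OF m]]]]
    by (simp add: funpow_Suc_right del: funpow.simps)
  then have "x - y \<in> S \<inter> {x. ((R m \<circ> E) ^^ Suc k) x = 0}"
    using subspace_diff[OF S x y] by blast
  then show "x = y" unfolding kernel by simp
qed

end

theorem proposition3p8:
  fixes sX :: "complex \<Rightarrow> 'x::banach \<Rightarrow> 'x"
    and sZ :: "complex \<Rightarrow> 'z::banach \<Rightarrow> 'z"
    and E :: "'x \<Rightarrow> 'z" and D :: "'x set" and A :: "'x \<Rightarrow> 'z" and \<mu> :: complex
  assumes "complex_scaling sX" and "complex_scaling sZ"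
    and "bounded_clinear_op sX sZ E"
    and "closed_densely_defined sX sZ D A"
    and "\<exists>n. has_resolvent_index sZ E D A n"
    and "in_resolvent_set sZ E D A \<mu>"
    and "p = p_res sZ E D A + 1"
    and "Xran = closure (range (R_r sZ E D A \<mu> ^^ p))"
    and "Zran = closure (range (R_l sZ E D A \<mu> ^^ p))"
    and "closed (E ` Xran)"
    and "Xran \<inter> {x. (R_r sZ E D A \<mu> ^^ p) x = 0} = {0}"
  shows "E ` Xran = Zran \<and> inj_on E Xran \<and>
         (\<exists>K. \<forall>z\<in>Zran. norm (inv_into Xran E z) \<le> K * norm z)"
proof -
  interpret operator_pencil sX sZ E D A using assms(1-4) by unfold_locales
  define q where "q = p_res sZ E D A"
  have q: "has_resolvent_index sZ E D A q"
    using assms(5) unfolding q_def p_res_def by (rule LeastI_ex)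
  have p: "p = Suc q" using assms(7) by (simp add: q_def)
  have X: "Xran = closure (range ((R \<mu> \<circ> E) ^^ Suc q))" using assms(8) by (simp add: p R_r_def)
  have Z: "Zran = closure (range ((E \<circ> R \<mu>) ^^ Suc q))" using assms(9) by (simp add: p R_l_def)
  have subspace: "subspace Xran"
    unfolding X by (intro subspace_closure linear_subspace_image subspace_UNIV bounded_linear.linear
        bounded_linear_funpow bounded_linear_resolvent_E assms(6))
  have image: "E ` Xran = Zran"
    using image_E_closure_range[OF q assms(6)] assms(10) by (simp add: X Z)
  have inj: "inj_on E Xran"
    using inj_on_E[OF assms(6) subspace] assms(11) by (simp add: p R_r_def)
  obtain K where "\<forall>z\<in>E ` Xran. norm (inv_into Xran E z) \<le> K * norm z"
    using bounded_inverse_on_closed_range[OF bounded_linear_E subspace _ assms(10) inj] X by auto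
  then show ?thesis using image inj by auto
qed

end
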